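(* Let $P$ satisfy (S1)–(S4). Let $i_1<\dots<i_\ell$ be integers and let $\bar h=(h_{i_1})_{i_1}\cdots(h_{i_\ell})_{i_\ell}\in H$ with all $h_{i_j}\ne1$. If $\bar h$ is a $[k,t]$-commutator for some integer $k\neq0$ (resp. a $[\pm,t]$-commutator), then $\bar h'=(h_{i_1})_1(h_{i_2})_2\cdots(h_{i_\ell})_\ell$ is also a $[k,t]$-commutator (resp. a $[\pm,t]$-commutator).
   Context: Conditions on a finite group $P$: (S1) for all $a_1,a_2\in P$ there are $x,y$ with $a_2=x^{-1}a_1^{-1}yxy^{-1}$; (S2) for all $a_1,a_2,a_3$ there are $u,v$ with $a_2=a_3ua_1^{-1}a_3^{-1}vu^{-1}v^{-1}$; (S3) for all $u_1,u_2,u_3,u_4\ne1$ there are $x,y,z$ with $u_4=x^{-1}u_1xy^{-1}u_2yz^{-1}u_3z$; (S4) there are $u_1,u_2,u_3\ne1$ such that there are no $x,y$ with $u_3=x^{-1}u_2^{-1}xy^{-1}u_1^{-1}y$. $H=\bigoplus_{i\in\mathbb Z}H_i$, each $H_i$ a copy of $P$, elements finitely supported sequences; $(h)_j$ is the element with $h$ at coordinate $j$ and $1$ elsewhere, and juxtaposition is the product in $H$. $\alpha((h_i)_i)=(h_{i+1})_i$. For $k>0$, $\bar h$ is a $[k,t]$-commutator if $\bar h=\bar g_1\alpha(\bar g_1^{-1})\cdots\bar g_k\alpha(\bar g_k^{-1})$ for some $\bar g_i\in H$; for $k<0$, if $\bar h=\alpha(\bar g_1)\bar g_1^{-1}\cdots\alpha(\bar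 g_{|k|})\bar g_{|k|}^{-1}$ for some $\bar g_i\in H$. $\bar h$ is a $[\pm,t]$-commutator if $\bar h=\bar g_1\alpha(\bar g_1^{-1})\alpha(\bar g_2)\bar g_2^{-1}$ or $\bar h=\alpha(\bar g_1)\bar g_1^{-1}\bar g_2\alpha(\bar g_2^{-1})$ for some $\bar g_1,\bar g_2\in H$. *)

theory Defs
  imports "HOL-Algebra.Group"
begin

definition S1 :: "('a, 'b) monoid_scheme \<Rightarrow> bool" where
  "S1 G \<longleftrightarrow> (\<forall>a1\<in>carrier G. \<forall>a2\<in>carrier G. \<exists>x\<in>carrier G. \<exists>y\<in>carrier G.
     a2 = inv\<^bsub>G\<^esub> x \<otimes>\<^bsub>G\<^esub> inv\<^bsub>G\<^esub> a1 \<otimes>\<^bsub>G\<^esub> y \<otimes>\<^bsub>G\<^esub> x \<otimes>\<^bsub>G\<^esub> inv\<^bsub>G\<^esub> y)"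

definition S2 :: "('a, 'b) monoid_scheme \<Rightarrow> bool" where
  "S2 G \<longleftrightarrow> (\<forall>a1\<in>carrier G. \<forall>a2\<in>carrier G. \<forall>a3\<in>carrier G. \<exists>u\<in>carrier G. \<exists>v\<in>carrier G.
     a2 = a3 \<otimes>\<^bsub>G\<^esub> u \<otimes>\<^bsub>G\<^esub> inv\<^bsub>G\<^esub> a1 \<otimes>\<^bsub>G\<^esub> inv\<^bsub>G\<^esub> a3 \<otimes>\<^bsub>G\<^esub> v
          \<otimes>\<^bsub>G\<^esub> inv\<^bsub>G\<^esub> u \<otimes>\<^bsub>G\<^esub> inv\<^bsub>G\<^esub> v)"

definition S3 :: "('a, 'b) monoid_scheme \<Rightarrow> bool" where
  "S3 G \<longleftrightarrow> (\<forall>u1\<in>carrier G. \<forall>u2\<in>carrier G. \<forall>u3\<in>carrier G. \<forall>u4\<in>carrier G.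
     u1 \<noteq> \<one>\<^bsub>G\<^esub> \<longrightarrow> u2 \<noteq> \<one>\<^bsub>G\<^esub> \<longrightarrow> u3 \<noteq> \<one>\<^bsub>G\<^esub> \<longrightarrow> u4 \<noteq> \<one>\<^bsub>G\<^esub> \<longrightarrow>
     (\<exists>x\<in>carrier G. \<exists>y\<in>carrier G. \<exists>z\<in>carrier G.
        u4 = inv\<^bsub>G\<^esub> x \<otimes>\<^bsub>G\<^esub> u1 \<otimes>\<^bsub>G\<^esub> x \<otimes>\<^bsub>G\<^esub> inv\<^bsub>G\<^esub> y \<otimes>\<^bsub>G\<^esub> u2 \<otimes>\<^bsub>G\<^esub> y
             \<otimes>\<^bsub>G\<^esub> inv\<^bsub>G\<^esub> z \<otimes>\<^bsub>G\<^esub> u3 \<otimes>\<^bsub>G\<^esub> z))"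

definition S4 :: "('a, 'b) monoid_scheme \<Rightarrow> bool" where
  "S4 G \<longleftrightarrow> (\<exists>u1\<in>carrier G. \<exists>u2\<in>carrier G. \<exists>u3\<in>carrier G.
     u1 \<noteq> \<one>\<^bsub>G\<^esub> \<and> u2 \<noteq> \<one>\<^bsub>G\<^esub> \<and> u3 \<noteq> \<one>\<^bsub>G\<^esub> \<and>
     \<not> (\<exists>x\<in>carrier G. \<exists>y\<in>carrier G.
        u3 = inv\<^bsub>G\<^esub> x \<otimes>\<^bsub>G\<^esub> inv\<^bsub>G\<^esub> u2 \<otimes>\<^bsub>G\<^esub> x \<otimes>\<^bsub>G\<^esub> inv\<^bsub>G\<^esub> y
             \<otimes>\<^bsub>G\<^esub> inv\<^bsub>G\<^esub> u1 \<otimes>\<^bsub>G\<^esub> y))"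

definition Hcarr :: "('a, 'b) monoid_scheme \<Rightarrow> (int \<Rightarrow> 'a) set" where
  "Hcarr G = {f. (\<forall>i. f i \<in> carrier G) \<and> finite {i. f i \<noteq> \<one>\<^bsub>G\<^esub>}}"

definition Hmul :: "('a, 'b) monoid_scheme \<Rightarrow> (int \<Rightarrow> 'a) \<Rightarrow> (int \<Rightarrow> 'a) \<Rightarrow> (int \<Rightarrow> 'a)" where
  "Hmul G f g = (\<lambda>i. f i \<otimes>\<^bsub>G\<^esub> g i)"

definition Hinv :: "('a, 'b) monoid_scheme \<Rightarrow> (int \<Rightarrow> 'a) \<Rightarrow> (int \<Rightarrow> 'a)" where
  "Hinv G f = (\<lambda>i. inv\<^bsub>G\<^esub> f i)"

definition Hone :: "('a, 'b) monoid_scheme \<Rightarrow> (int \<Rightarrow> 'a)" where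
  "Hone G = (\<lambda>i. \<one>\<^bsub>G\<^esub>)"

definition shift :: "(int \<Rightarrow> 'a) \<Rightarrow> (int \<Rightarrow> 'a)" where
  "shift f = (\<lambda>i. f (i + 1))"

definition sgl :: "('a, 'b) monoid_scheme \<Rightarrow> int \<Rightarrow> 'a \<Rightarrow> (int \<Rightarrow> 'a)" where
  "sgl G j h = (\<lambda>i. if i = j then h else \<one>\<^bsub>G\<^esub>)"

fun Hprod_list :: "('a, 'b) monoid_scheme \<Rightarrow> (int \<Rightarrow> 'a) list \<Rightarrow> (int \<Rightarrow> 'a)" where
  "Hprod_list G [] = Hone G"
| "Hprod_list G (f # fs) = Hmul G f (Hprod_list G fs)"

definition kt_comm :: "('a, 'b) monoid_scheme \<Rightarrow> int \<Rightarrow> (int \<Rightarrow> 'a) \<Rightarrow> bool" where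
  "kt_comm G k h \<longleftrightarrow>
     (k > 0 \<and> (\<exists>gs. length gs = nat k \<and> set gs \<subseteq> Hcarr G \<and>
        h = Hprod_list G (map (\<lambda>g. Hmul G g (shift (Hinv G g))) gs))) \<or>
     (k < 0 \<and> (\<exists>gs. length gs = nat (- k) \<and> set gs \<subseteq> Hcarr G \<and>
        h = Hprod_list G (map (\<lambda>g. Hmul G (shift g) (Hinv G g)) gs)))"

definition pm_comm :: "('a, 'b) monoid_scheme \<Rightarrow> (int \<Rightarrow> 'a) \<Rightarrow> bool" where
  "pm_comm G h \<longleftrightarrow> (\<exists>g1\<in>Hcarr G. \<exists>g2\<in>Hcarr G.
     h = Hprod_list G [g1, shift (Hinv G g1), shift g2, Hinv G g2] \<or>
     h = Hprod_list G [shift g1, Hinv G g1, g2, shift (Hinv G g2)])"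

end

theory Submission
  imports Defs
begin

(*
  A finitely supported sequence f is a [1,t]-commutator g \<alpha>(g\<inverse>) iff the ordered product of its
  coordinates is 1: f_i = g_i g_(i+1)\<inverse> telescopes, and conversely g_i := f_i f_(i+1) \<cdots> works.
  A [-1,t]-commutator is the inverse of a [1,t]-commutator, and a [\<plusminus>,t]-commutator is, after
  conjugating each coordinate, a [1,t]-commutator (first form: of h\<inverse>; second form: of h).
  So for h = (h_1)_(i_1) \<cdots> (h_l)_(i_l) each property is a condition on the list h_1, ..., h_l
  alone (some ordered product of the h_j, of their inverses, or of conjugates of these is 1),
  which does not see the positions i_j. For |k| \<ge> 2 there is nothing to prove: by (S1) every
  element of P is a commutator, which makes every element of H a product of two
  [1,t]-commutators. Only (S1) is used.
*)

section \<open>Ordered products over intervals\<close>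

fun seg_prod :: "('a, 'b) monoid_scheme \<Rightarrow> (int \<Rightarrow> 'a) \<Rightarrow> int \<Rightarrow> nat \<Rightarrow> 'a" where
  "seg_prod G f M 0 = \<one>\<^bsub>G\<^esub>"
| "seg_prod G f M (Suc n) = f M \<otimes>\<^bsub>G\<^esub> seg_prod G f (M + 1) n"

lemma finite_int_subset_interval:
  assumes "finite (S :: int set)"
  shows "\<exists>M n. S \<subseteq> {M..<M + int n}"
proof -
  let ?T = "insert 0 S"
  have "Min ?T \<le> i \<and> i \<le> Max ?T" if "i \<in> S" for i
    using assms that by simp
  then have "S \<subseteq> {Min ?T..<Min ?T + int (nat (Max ?T - Min ?T + 1))}"
    by fastforce
  then show ?thesis by blast
qed

context group begin

lemma inv_mult_cancel_left [simp]:
  "x \<in> carrier G \<Longrightarrow> y \<in> carrier G \<Longrightarrow> inv x \<otimes> (x \<otimes> y) = y"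
  by (simp add: m_assoc[symmetric])

lemma mult_inv_cancel_left [simp]:
  "x \<in> carrier G \<Longrightarrow> y \<in> carrier G \<Longrightarrow> x \<otimes> (inv x \<otimes> y) = y"
  by (simp add: m_assoc[symmetric])

lemma seg_prod_closed: "(\<And>i. f i \<in> carrier G) \<Longrightarrow> seg_prod G f M n \<in> carrier G"
  by (induction n arbitrary: M) auto

lemma seg_prod_add:
  assumes "\<And>i. f i \<in> carrier G"
  shows "seg_prod G f M (a + b) = seg_prod G f M a \<otimes> seg_prod G f (M + int a) b"
proof (induction a arbitrary: M)
  case (Suc a)
  then show ?case by (simp add: seg_prod_closed assms m_assoc add.assoc)
qed (simp add: seg_prod_closed assms)

lemma seg_prod_cong:
  "(\<And>i. M \<le> i \<Longrightarrow> i < M + int n \<Longrightarrow> f i = g i) \<Longrightarrow> seg_prod G f M n = seg_prod G g M n"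
  by (induction n arbitrary: M) auto

lemma seg_prod_eq_one:
  "(\<And>i. M \<le> i \<Longrightarrow> i < M + int n \<Longrightarrow> f i = \<one>) \<Longrightarrow> seg_prod G f M n = \<one>"
  by (induction n arbitrary: M) auto

lemma seg_prod_telescope:
  assumes "\<And>i. w i \<in> carrier G"
  shows "seg_prod G (\<lambda>i. w i \<otimes> inv (w (i + 1))) M n = w M \<otimes> inv (w (M + int n))"
proof (induction n arbitrary: M)
  case (Suc n)
  then show ?case using assms by (simp add: m_assoc add.assoc)
qed (simp add: assms)

lemma seg_prod_extend:
  assumes f: "\<And>i. f i \<in> carrier G" and supp: "{i. f i \<noteq> \<one>} \<subseteq> {M..<M + int n}"
    and "M' \<le> M" and "M + int n \<le> M' + int n'"
  shows "seg_prod G f M' n' = seg_prod G f M n"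
proof -
  define a where "a = nat (M - M')"
  define b where "b = nat (M' + int n' - M - int n)"
  have n': "n' = a + (n + b)" and M: "M' + int a = M"
    using assms(3,4) by (simp_all add: a_def b_def)
  have outside: "f i = \<one>" if "i < M \<or> M + int n \<le> i" for i
    using supp that by force
  have "seg_prod G f M' n' = seg_prod G f M' a \<otimes> (seg_prod G f M n \<otimes> seg_prod G f (M + int n) b)"
    unfolding n' seg_prod_add[OF f] M ..
  also have "seg_prod G f M' a = \<one>"
    by (rule seg_prod_eq_one) (use outside M in auto)
  also have "seg_prod G f (M + int n) b = \<one>"
    by (rule seg_prod_eq_one) (use outside in auto)
  finally show ?thesis by (simp add: seg_prod_closed f)
qed

end

context group begin

lemma Hcarr_closed: "w \<in> Hcarr G \<Longrightarrow> w i \<in> carrier G"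
  by (simp add: Hcarr_def)

lemma Hcarr_finite_support: "w \<in> Hcarr G \<Longrightarrow> finite {i. w i \<noteq> \<one>}"
  by (simp add: Hcarr_def)

lemma HcarrI:
  "(\<And>i. f i \<in> carrier G) \<Longrightarrow> {i. f i \<noteq> \<one>} \<subseteq> S \<Longrightarrow> finite S \<Longrightarrow> f \<in> Hcarr G"
  by (auto simp: Hcarr_def intro: finite_subset)

lemma Hcarr_mult: "f \<in> Hcarr G \<Longrightarrow> g \<in> Hcarr G \<Longrightarrow> (\<lambda>i. f i \<otimes> g i) \<in> Hcarr G"
  by (rule HcarrI[where S = "{i. f i \<noteq> \<one>} \<union> {i. g i \<noteq> \<one>}"])
    (auto simp: Hcarr_closed Hcarr_finite_support)

lemma Hcarr_inv: "f \<in> Hcarr G \<Longrightarrow> (\<lambda>i. inv (f i)) \<in> Hcarr G"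
  by (rule HcarrI[where S = "{i. f i \<noteq> \<one>}"]) (auto simp: Hcarr_closed Hcarr_finite_support)

lemma Hcarr_translate:
  assumes "f \<in> Hcarr G"
  shows "(\<lambda>i. f (i + d)) \<in> Hcarr G"
proof (rule HcarrI)
  show "{i. f (i + d) \<noteq> \<one>} \<subseteq> (\<lambda>i. i - d) ` {i. f i \<noteq> \<one>}"
    by (force intro: image_eqI[where x = "_ + d"])
qed (use assms in \<open>simp_all add: Hcarr_closed Hcarr_finite_support\<close>)

lemma Hmul_Hone: "(\<And>i. f i \<in> carrier G) \<Longrightarrow> Hmul G f (Hone G) = f"
  by (simp add: Hmul_def Hone_def)

lemma Hprod_list_pad: "Hprod_list G (fs @ replicate m (Hone G)) = Hprod_list G fs"
proof -
  have "Hprod_list G (replicate m (Hone G)) = Hone G"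
    by (induction m) (simp_all add: Hmul_def Hone_def)
  then show ?thesis
    by (induction fs) simp_all
qed

end

definition placed :: "('a, 'b) monoid_scheme \<Rightarrow> int list \<Rightarrow> 'a list \<Rightarrow> (int \<Rightarrow> 'a)" where
  "placed G xs hs = Hprod_list G (map (\<lambda>(i, h). sgl G i h) (zip xs hs))"

lemma placed_Nil [simp]: "placed G [] hs = Hone G"
  by (simp add: placed_def)

lemma placed_Nil2 [simp]: "placed G xs [] = Hone G"
  by (simp add: placed_def)

lemma placed_Cons [simp]:
  "placed G (i # xs) (h # hs) j = sgl G i h j \<otimes>\<^bsub>G\<^esub> placed G xs hs j"
  by (simp add: placed_def Hmul_def)

context group begin

lemma placed_closed: "set hs \<subseteq> carrier G \<Longrightarrow> placed G xs hs j \<in> carrier G"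
proof (induction xs arbitrary: hs)
  case (Cons i xs)
  then show ?case by (cases hs) (auto simp: Hone_def sgl_def)
qed (simp add: Hone_def)

lemma placed_support: "set hs \<subseteq> carrier G \<Longrightarrow> {j. placed G xs hs j \<noteq> \<one>} \<subseteq> set xs"
proof (induction xs arbitrary: hs)
  case (Cons i xs)
  then show ?case by (cases hs) (fastforce simp: Hone_def sgl_def placed_closed)+
qed (simp add: Hone_def)

lemma placed_Hcarr: "set hs \<subseteq> carrier G \<Longrightarrow> placed G xs hs \<in> Hcarr G"
  by (rule HcarrI[OF placed_closed placed_support]) auto

lemma placed_nth:
  assumes "distinct xs" "length xs = length hs" "set hs \<subseteq> carrier G" "k < length xs"
  shows "placed G xs hs (xs ! k) = hs ! k"
  using assms(2,1,3,4)
proof (induction xs hs arbitrary: k rule: list_induct2)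
  case (Cons i xs h hs)
  have "i \<notin> {j. placed G xs hs j \<noteq> \<one>}"
    using Cons.prems placed_support[of hs xs] by auto
  with Cons show ?case
    by (cases k) (auto simp: sgl_def placed_closed nth_mem subsetD)
qed simp

lemma map_placed:
  "distinct xs \<Longrightarrow> length xs = length hs \<Longrightarrow> set hs \<subseteq> carrier G \<Longrightarrow> map (placed G xs hs) xs = hs"
  by (simp add: list_eq_iff_nth_eq placed_nth)

lemma placed_map:
  assumes "distinct xs" "length xs = length hs" "set hs \<subseteq> carrier G"
    and "\<And>i. \<phi> i \<one> = \<one>" and "\<And>i x. x \<in> carrier G \<Longrightarrow> \<phi> i x \<in> carrier G"
  shows "(\<lambda>j. \<phi> j (placed G xs hs j)) = placed G xs (map2 \<phi> xs hs)"
proof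
  fix j
  have \<phi>hs: "set (map2 \<phi> xs hs) \<subseteq> carrier G"
    using assms(3,5) by (auto elim!: in_set_zipE)
  show "\<phi> j (placed G xs hs j) = placed G xs (map2 \<phi> xs hs) j"
  proof (cases "j \<in> set xs")
    case True
    then obtain k where "k < length xs" "j = xs ! k"
      by (auto simp: in_set_conv_nth)
    then show ?thesis
      using assms(1-3) \<phi>hs by (simp add: placed_nth)
  next
    case False
    then have "placed G xs hs j = \<one>" "placed G xs (map2 \<phi> xs hs) j = \<one>"
      using placed_support[OF assms(3)] placed_support[OF \<phi>hs] by blast+
    then show ?thesis
      using assms(4) by simp
  qed
qed

lemma Hinv_placed:
  assumes "distinct xs" "length xs = length hs" "set hs \<subseteq> carrier G"
  shows "Hinv G (placed G xs hs) = placed G xs (map (\<lambda>h. inv h) hs)"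
proof -
  have "Hinv G (placed G xs hs) = placed G xs (map2 (\<lambda>_ h. inv h) xs hs)"
    unfolding Hinv_def by (rule placed_map[OF assms]) auto
  also have "map2 (\<lambda>_ h. inv h) xs hs = map (\<lambda>h. inv h) hs"
    using assms(2) by (simp add: list_eq_iff_nth_eq)
  finally show ?thesis .
qed

lemma placed_conj:
  assumes "distinct xs" "length xs = length hs" "set hs \<subseteq> carrier G" "\<And>i. c i \<in> carrier G"
  shows "(\<lambda>i. inv (c i) \<otimes> placed G xs hs i \<otimes> c i)
    = placed G xs (map2 (\<lambda>c h. inv c \<otimes> h \<otimes> c) (map c xs) hs)"
proof -
  have "(\<lambda>i. inv (c i) \<otimes> placed G xs hs i \<otimes> c i)
      = placed G xs (map2 (\<lambda>i h. inv (c i) \<otimes> h \<otimes> c i) xs hs)"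
    by (rule placed_map[OF assms(1-3)]) (simp_all add: assms(4))
  also have "map2 (\<lambda>i h. inv (c i) \<otimes> h \<otimes> c i) xs hs = map2 (\<lambda>c h. inv c \<otimes> h \<otimes> c) (map c xs) hs"
    by (auto simp: zip_map1)
  finally show ?thesis .
qed

lemma seg_prod_placed:
  assumes "sorted_wrt (<) xs" "length xs = length hs" "set hs \<subseteq> carrier G"
    and "set xs \<subseteq> {M..<M + int n}"
  shows "seg_prod G (placed G xs hs) M n = foldr (\<otimes>) hs \<one>"
  using assms(2,1,3,4)
proof (induction xs hs arbitrary: M n rule: list_induct2)
  case Nil
  then show ?case by (simp add: Hone_def seg_prod_eq_one)
next
  case (Cons i xs h hs)
  let ?f = "placed G (i # xs) (h # hs)"
  have hs: "h \<in> carrier G" "set hs \<subseteq> carrier G"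
    using Cons.prems by auto
  have i: "M \<le> i" "i < M + int n" and xs: "set xs \<subseteq> {i<..<M + int n}"
    using Cons.prems by auto
  define m where "m = nat (M + int n - i - 1)"
  have m: "i + int (Suc m) = M + int n"
    using i by (simp add: m_def)
  have "{j. ?f j \<noteq> \<one>} \<subseteq> {i..<i + int (Suc m)}"
    using placed_support[of "h # hs" "i # xs"] hs xs i m by fastforce
  then have "seg_prod G ?f M n = seg_prod G ?f i (Suc m)"
    using placed_closed[of "h # hs" "i # xs"] hs i m by (intro seg_prod_extend) auto
  also have "\<dots> = h \<otimes> seg_prod G (placed G xs hs) (i + 1) m"
  proof -
    have "placed G xs hs i = \<one>"
      using placed_support[of hs xs] hs xs by fastforce
    moreover have "seg_prod G ?f (i + 1) m = seg_prod G (placed G xs hs) (i + 1) m"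
      by (rule seg_prod_cong) (simp add: sgl_def placed_closed hs)
    ultimately show ?thesis
      using hs by (simp add: sgl_def)
  qed
  also have "seg_prod G (placed G xs hs) (i + 1) m = foldr (\<otimes>) hs \<one>"
    using Cons.prems hs xs m by (intro Cons.IH) force+
  finally show ?case by simp
qed

end

section \<open>[1,t]-commutators\<close>

(* g \<alpha>(g\<inverse>) is the commutator [g,t] in the semidirect product of H and \<langle>t\<rangle>. *)
definition t_comm :: "('a, 'b) monoid_scheme \<Rightarrow> (int \<Rightarrow> 'a) \<Rightarrow> (int \<Rightarrow> 'a)" where
  "t_comm G g = Hmul G g (shift (Hinv G g))"

lemma t_comm_apply: "t_comm G g i = g i \<otimes>\<^bsub>G\<^esub> inv\<^bsub>G\<^esub> g (i + 1)"
  by (simp add: t_comm_def Hmul_def shift_def Hinv_def)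

context group begin

lemma t_comm_closed: "g \<in> Hcarr G \<Longrightarrow> t_comm G g i \<in> carrier G"
  by (simp add: t_comm_apply Hcarr_closed)

lemma t_comm_Hone: "t_comm G (Hone G) = Hone G"
  by (simp add: t_comm_apply[abs_def] Hone_def)

lemma t_comm_image_iff_seg_prod:
  assumes f: "\<And>i. f i \<in> carrier G" and supp: "{i. f i \<noteq> \<one>} \<subseteq> {M..<M + int n}"
  shows "f \<in> t_comm G ` Hcarr G \<longleftrightarrow> seg_prod G f M n = \<one>"
proof
  assume "f \<in> t_comm G ` Hcarr G"
  then obtain w where w: "w \<in> Hcarr G" and fw: "f = (\<lambda>i. w i \<otimes> inv (w (i + 1)))"
    by (auto simp: t_comm_apply[abs_def])
  have "finite ({i. w i \<noteq> \<one>} \<union> {M, M + int n})"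
    using Hcarr_finite_support[OF w] by simp
  then obtain M' n' where M'n': "{i. w i \<noteq> \<one>} \<union> {M, M + int n} \<subseteq> {M'..<M' + int n'}"
    using finite_int_subset_interval by blast
  then have "seg_prod G f M n = seg_prod G f (M' - 1) (Suc n')"
    by (intro seg_prod_extend[OF f supp, symmetric]) auto
  also have "\<dots> = w (M' - 1) \<otimes> inv (w (M' - 1 + int (Suc n')))"
    unfolding fw by (rule seg_prod_telescope) (rule Hcarr_closed[OF w])
  also have "M' - 1 + int (Suc n') = M' + int n'"
    by simp
  also have "w (M' - 1) = \<one>"
    using M'n' by auto
  also have "w (M' + int n') = \<one>"
    using M'n' by auto
  finally show "seg_prod G f M n = \<one>" by simp
next
  assume prod: "seg_prod G f M n = \<one>"
  define w where "w i = seg_prod G f i (nat (M + int n - i))" for i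
  have wc: "w i \<in> carrier G" for i
    unfolding w_def by (rule seg_prod_closed[OF f])
  have "f i = w i \<otimes> inv (w (i + 1))" for i
  proof (cases "i < M + int n")
    case True
    then have "nat (M + int n - i) = Suc (nat (M + int n - (i + 1)))"
      by simp
    then have "w i = f i \<otimes> w (i + 1)"
      by (simp add: w_def)
    then show ?thesis using f wc by (simp add: m_assoc)
  next
    case False
    then show ?thesis using supp by (force simp: w_def)
  qed
  moreover have "w i = \<one>" if "i \<notin> {M..<M + int n}" for i
  proof (cases "i < M")
    case True
    then have "w i = seg_prod G f M n"
      unfolding w_def by (rule_tac seg_prod_extend[OF f supp]) auto
    then show ?thesis using prod by simp
  qed (use that in \<open>simp add: w_def\<close>)
  then have "w \<in> Hcarr G"
    by (intro HcarrI[OF wc, where S = "{M..<M + int n}"]) blast+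
  ultimately show "f \<in> t_comm G ` Hcarr G"
    by (auto simp: t_comm_apply[abs_def])
qed

lemma t_comm_image_placed_iff:
  assumes "sorted_wrt (<) xs" "length xs = length hs" "set hs \<subseteq> carrier G"
  shows "placed G xs hs \<in> t_comm G ` Hcarr G \<longleftrightarrow> foldr (\<otimes>) hs \<one> = \<one>"
proof -
  obtain M n where xs: "set xs \<subseteq> {M..<M + int n}"
    using finite_int_subset_interval by blast
  then have "placed G xs hs \<in> t_comm G ` Hcarr G \<longleftrightarrow> seg_prod G (placed G xs hs) M n = \<one>"
    using placed_support[OF assms(3)]
    by (intro t_comm_image_iff_seg_prod placed_closed[OF assms(3)]) auto
  also have "seg_prod G (placed G xs hs) M n = foldr (\<otimes>) hs \<one>"
    by (rule seg_prod_placed[OF assms xs])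
  finally show ?thesis .
qed

end

section \<open>[\<plusminus>,t]-commutators\<close>

definition conj_t_comm :: "('a, 'b) monoid_scheme \<Rightarrow> (int \<Rightarrow> 'a) \<Rightarrow> bool" where
  "conj_t_comm G h \<longleftrightarrow>
     (\<exists>c\<in>Hcarr G. (\<lambda>i. inv\<^bsub>G\<^esub> c i \<otimes>\<^bsub>G\<^esub> h i \<otimes>\<^bsub>G\<^esub> c i) \<in> t_comm G ` Hcarr G)"

definition conj_prod_one :: "('a, 'b) monoid_scheme \<Rightarrow> 'a list \<Rightarrow> bool" where
  "conj_prod_one G hs \<longleftrightarrow> (\<exists>cs. length cs = length hs \<and> set cs \<subseteq> carrier G \<and>
     foldr (\<otimes>\<^bsub>G\<^esub>) (map2 (\<lambda>c h. inv\<^bsub>G\<^esub> c \<otimes>\<^bsub>G\<^esub> h \<otimes>\<^bsub>G\<^esub> c) cs hs) \<one>\<^bsub>G\<^esub> = \<one>\<^bsub>G\<^esub>)"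

context group begin

lemma conj_t_comm_placed_iff:
  assumes xs: "sorted_wrt (<) xs" "length xs = length hs" and hs: "set hs \<subseteq> carrier G"
  shows "conj_t_comm G (placed G xs hs) \<longleftrightarrow> conj_prod_one G hs"
proof -
  let ?conjugates = "\<lambda>cs. length cs = length hs \<and> set cs \<subseteq> carrier G \<and>
    foldr (\<otimes>) (map2 (\<lambda>c h. inv c \<otimes> h \<otimes> c) cs hs) \<one> = \<one>"
  have dist: "distinct xs"
    using xs(1) by (simp add: strict_sorted_iff)
  have conj_closed: "set (map2 (\<lambda>c h. inv c \<otimes> h \<otimes> c) cs hs) \<subseteq> carrier G"
    if "set cs \<subseteq> carrier G" for cs
    using that hs by (auto elim!: in_set_zipE)
  show ?thesis
    unfolding conj_prod_one_def
  proof
    assume "conj_t_comm G (placed G xs hs)"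
    then obtain c where c: "c \<in> Hcarr G"
      and "(\<lambda>i. inv (c i) \<otimes> placed G xs hs i \<otimes> c i) \<in> t_comm G ` Hcarr G"
      unfolding conj_t_comm_def by blast
    then have "placed G xs (map2 (\<lambda>c h. inv c \<otimes> h \<otimes> c) (map c xs) hs) \<in> t_comm G ` Hcarr G"
      by (simp add: placed_conj[OF dist xs(2) hs Hcarr_closed[OF c]])
    moreover have "set (map c xs) \<subseteq> carrier G"
      using Hcarr_closed[OF c] by auto
    ultimately have "?conjugates (map c xs)"
      using t_comm_image_placed_iff[OF xs(1) _ conj_closed] xs(2) by simp
    then show "\<exists>cs. ?conjugates cs" ..
  next
    assume "\<exists>cs. ?conjugates cs"
    then obtain cs where cs: "?conjugates cs" ..
    let ?c = "placed G xs cs"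
    have "map ?c xs = cs"
      using cs xs by (intro map_placed dist) auto
    then have "(\<lambda>i. inv (?c i) \<otimes> placed G xs hs i \<otimes> ?c i)
        = placed G xs (map2 (\<lambda>c h. inv c \<otimes> h \<otimes> c) cs hs)"
      using placed_conj[OF dist xs(2) hs placed_closed[of cs]] cs by simp
    also have "\<dots> \<in> t_comm G ` Hcarr G"
      using t_comm_image_placed_iff[OF xs(1) _ conj_closed] xs(2) cs by simp
    finally show "conj_t_comm G (placed G xs hs)"
      unfolding conj_t_comm_def using placed_Hcarr cs by blast
  qed
qed

lemma pm_first_form_iff:
  assumes h: "\<And>i. h i \<in> carrier G"
  shows "(\<exists>g1\<in>Hcarr G. \<exists>g2\<in>Hcarr G. h = Hprod_list G [g1, shift (Hinv G g1), shift g2, Hinv G g2])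
    \<longleftrightarrow> conj_t_comm G (Hinv G h)"
proof
  assume "\<exists>g1\<in>Hcarr G. \<exists>g2\<in>Hcarr G. h = Hprod_list G [g1, shift (Hinv G g1), shift g2, Hinv G g2]"
  then obtain g1 g2 where g: "g1 \<in> Hcarr G" "g2 \<in> Hcarr G"
    and h_eq: "\<And>i. h i = g1 i \<otimes> (inv (g1 (i + 1)) \<otimes> (g2 (i + 1) \<otimes> (inv (g2 i) \<otimes> \<one>)))"
    by (auto simp: Hmul_def shift_def Hinv_def Hone_def)
  (* conjugating h\<inverse> by g1 gives the [1,t]-commutator of g1\<inverse> g2 *)
  let ?w = "\<lambda>i. inv (g1 i) \<otimes> g2 i"
  have "(\<lambda>i. inv (g1 i) \<otimes> Hinv G h i \<otimes> g1 i) = t_comm G ?w"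
    using Hcarr_closed[OF g(1)] Hcarr_closed[OF g(2)]
    by (auto simp: h_eq Hinv_def t_comm_apply m_assoc inv_mult_group)
  moreover have "?w \<in> Hcarr G"
    using g by (intro Hcarr_mult Hcarr_inv)
  ultimately show "conj_t_comm G (Hinv G h)"
    unfolding conj_t_comm_def using g(1) by auto
next
  assume "conj_t_comm G (Hinv G h)"
  then obtain c w where c: "c \<in> Hcarr G" and w: "w \<in> Hcarr G"
    and conj_eq: "\<And>i. inv (c i) \<otimes> inv (h i) \<otimes> c i = w i \<otimes> inv (w (i + 1))"
    unfolding conj_t_comm_def by (auto simp: Hinv_def t_comm_apply fun_eq_iff)
  note cw = Hcarr_closed[OF c] Hcarr_closed[OF w]
  have "h i = Hprod_list G [c, shift (Hinv G c), shift (\<lambda>i. c i \<otimes> w i), Hinv G (\<lambda>i. c i \<otimes> w i)] i"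
    for i
  proof -
    have "h i = c i \<otimes> inv (inv (c i) \<otimes> inv (h i) \<otimes> c i) \<otimes> inv (c i)"
      using cw h by (simp add: m_assoc inv_mult_group)
    then show ?thesis
      using cw by (simp add: conj_eq Hmul_def shift_def Hinv_def Hone_def m_assoc inv_mult_group)
  qed
  then show "\<exists>g1\<in>Hcarr G. \<exists>g2\<in>Hcarr G. h = Hprod_list G [g1, shift (Hinv G g1), shift g2, Hinv G g2]"
    using c w Hcarr_mult by blast
qed

lemma pm_second_form_iff:
  assumes h: "\<And>i. h i \<in> carrier G"
  shows "(\<exists>g1\<in>Hcarr G. \<exists>g2\<in>Hcarr G. h = Hprod_list G [shift g1, Hinv G g1, g2, shift (Hinv G g2)])
    \<longleftrightarrow> conj_t_comm G h"
proof
  assume "\<exists>g1\<in>Hcarr G. \<exists>g2\<in>Hcarr G. h = Hprod_list G [shift g1, Hinv G g1, g2, shift (Hinv G g2)]"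
  then obtain g1 g2 where g: "g1 \<in> Hcarr G" "g2 \<in> Hcarr G"
    and h_eq: "\<And>i. h i = g1 (i + 1) \<otimes> (inv (g1 i) \<otimes> (g2 i \<otimes> (inv (g2 (i + 1)) \<otimes> \<one>)))"
    by (auto simp: Hmul_def shift_def Hinv_def Hone_def)
  (* conjugating h by \<alpha>(g1) gives the [1,t]-commutator of g1\<inverse> g2 *)
  let ?w = "\<lambda>i. inv (g1 i) \<otimes> g2 i"
  have "(\<lambda>i. inv (g1 (i + 1)) \<otimes> h i \<otimes> g1 (i + 1)) = t_comm G ?w"
    using Hcarr_closed[OF g(1)] Hcarr_closed[OF g(2)]
    by (auto simp: h_eq t_comm_apply m_assoc inv_mult_group)
  moreover have "?w \<in> Hcarr G"
    using g by (intro Hcarr_mult Hcarr_inv)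
  ultimately show "conj_t_comm G h"
    unfolding conj_t_comm_def using Hcarr_translate[OF g(1)] by auto
next
  assume "conj_t_comm G h"
  then obtain c w where c: "c \<in> Hcarr G" and w: "w \<in> Hcarr G"
    and conj_eq: "\<And>i. inv (c i) \<otimes> h i \<otimes> c i = w i \<otimes> inv (w (i + 1))"
    unfolding conj_t_comm_def by (auto simp: t_comm_apply fun_eq_iff)
  note cw = Hcarr_closed[OF c] Hcarr_closed[OF w]
  let ?g1 = "\<lambda>i. c (i - 1)"
  have "h i = Hprod_list G [shift ?g1, Hinv G ?g1, \<lambda>i. ?g1 i \<otimes> w i, shift (Hinv G (\<lambda>i. ?g1 i \<otimes> w i))] i"
    for i
  proof -
    have "h i = c i \<otimes> (inv (c i) \<otimes> h i \<otimes> c i) \<otimes> inv (c i)"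
      using cw h by (simp add: m_assoc)
    then show ?thesis
      using cw by (simp add: conj_eq Hmul_def shift_def Hinv_def Hone_def m_assoc inv_mult_group)
  qed
  moreover have "?g1 \<in> Hcarr G"
    using Hcarr_translate[OF c, of "- 1"] by simp
  ultimately show "\<exists>g1\<in>Hcarr G. \<exists>g2\<in>Hcarr G. h = Hprod_list G [shift g1, Hinv G g1, g2, shift (Hinv G g2)]"
    using w Hcarr_mult by blast
qed

lemma pm_comm_iff:
  assumes "\<And>i. h i \<in> carrier G"
  shows "pm_comm G h \<longleftrightarrow> conj_t_comm G (Hinv G h) \<or> conj_t_comm G h"
  unfolding pm_comm_def pm_first_form_iff[OF assms, symmetric] pm_second_form_iff[OF assms, symmetric]
  by blast

lemma pm_comm_placed_iff:
  assumes xs: "sorted_wrt (<) xs" "length xs = length hs" and hs: "set hs \<subseteq> carrier G"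
  shows "pm_comm G (placed G xs hs) \<longleftrightarrow> conj_prod_one G (map (\<lambda>h. inv h) hs) \<or> conj_prod_one G hs"
proof -
  have "Hinv G (placed G xs hs) = placed G xs (map (\<lambda>h. inv h) hs)"
    using xs hs by (simp add: Hinv_placed strict_sorted_iff)
  moreover have "set (map (\<lambda>h. inv h) hs) \<subseteq> carrier G"
    using hs by auto
  ultimately show ?thesis
    using xs by (simp add: pm_comm_iff placed_closed hs conj_t_comm_placed_iff)
qed

end

section \<open>[k,t]-commutators\<close>

context group begin

lemma kt_comm_one_iff: "kt_comm G 1 h \<longleftrightarrow> h \<in> t_comm G ` Hcarr G"
proof -
  have "kt_comm G 1 h \<longleftrightarrow> (\<exists>g\<in>Hcarr G. h = Hprod_list G [t_comm G g])"
    unfolding kt_comm_def t_comm_def[symmetric] by (auto simp: length_Suc_conv)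
  also have "\<dots> \<longleftrightarrow> (\<exists>g\<in>Hcarr G. h = t_comm G g)"
    by (rule bex_cong[OF refl]) (simp add: Hmul_Hone[OF t_comm_closed])
  finally show ?thesis
    by blast
qed

lemma kt_comm_minus_one_iff:
  assumes h: "\<And>i. h i \<in> carrier G"
  shows "kt_comm G (- 1) h \<longleftrightarrow> Hinv G h \<in> t_comm G ` Hcarr G"
proof -
  have "kt_comm G (- 1) h \<longleftrightarrow> (\<exists>g\<in>Hcarr G. h = Hprod_list G [Hmul G (shift g) (Hinv G g)])"
    unfolding kt_comm_def by (auto simp: length_Suc_conv)
  also have "\<dots> \<longleftrightarrow> (\<exists>g\<in>Hcarr G. Hinv G h = t_comm G g)"
  proof (rule bex_cong[OF refl])
    fix g assume g: "g \<in> Hcarr G"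
    have "Hprod_list G [Hmul G (shift g) (Hinv G g)] = Hinv G (t_comm G g)"
      using Hcarr_closed[OF g]
      by (auto simp: Hmul_def shift_def Hinv_def Hone_def t_comm_apply inv_mult_group)
    moreover have "h = Hinv G f \<longleftrightarrow> Hinv G h = f" if "\<And>i. f i \<in> carrier G" for f
      using that h by (auto simp: Hinv_def)
    ultimately show "h = Hprod_list G [Hmul G (shift g) (Hinv G g)] \<longleftrightarrow> Hinv G h = t_comm G g"
      using t_comm_closed[OF g] by simp
  qed
  finally show ?thesis
    by blast
qed

lemma kt_comm_one_placed_iff:
  assumes "sorted_wrt (<) xs" "length xs = length hs" "set hs \<subseteq> carrier G"
  shows "kt_comm G 1 (placed G xs hs) \<longleftrightarrow> foldr (\<otimes>) hs \<one> = \<one>"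
  by (simp add: kt_comm_one_iff t_comm_image_placed_iff assms)

lemma kt_comm_minus_one_placed_iff:
  assumes xs: "sorted_wrt (<) xs" "length xs = length hs" and hs: "set hs \<subseteq> carrier G"
  shows "kt_comm G (- 1) (placed G xs hs) \<longleftrightarrow> foldr (\<otimes>) (map (\<lambda>h. inv h) hs) \<one> = \<one>"
proof -
  have "Hinv G (placed G xs hs) = placed G xs (map (\<lambda>h. inv h) hs)"
    using xs hs by (simp add: Hinv_placed strict_sorted_iff)
  moreover have "set (map (\<lambda>h. inv h) hs) \<subseteq> carrier G"
    using hs by auto
  ultimately show ?thesis
    using xs by (simp add: kt_comm_minus_one_iff placed_closed hs t_comm_image_placed_iff)
qed

lemma S1_imp_commutator:
  assumes "S1 G" "a \<in> carrier G"
  shows "\<exists>x\<in>carrier G. \<exists>y\<in>carrier G. a = inv x \<otimes> y \<otimes> x \<otimes> inv y"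
proof -
  have "\<forall>a1\<in>carrier G. \<forall>a2\<in>carrier G. \<exists>x\<in>carrier G. \<exists>y\<in>carrier G.
      a2 = inv x \<otimes> inv a1 \<otimes> y \<otimes> x \<otimes> inv y"
    using assms(1) unfolding S1_def .
  then have "\<exists>x\<in>carrier G. \<exists>y\<in>carrier G. a = inv x \<otimes> inv \<one> \<otimes> y \<otimes> x \<otimes> inv y"
    using assms(2) by blast
  then show ?thesis
    by simp
qed

lemma t_comm_three_point:
  assumes "x \<in> carrier G" "y \<in> carrier G"
  shows "placed G [M - 3, M - 2, M - 1] [inv y, x, inv x \<otimes> y] \<in> t_comm G ` Hcarr G"
  using assms by (subst t_comm_image_placed_iff) (simp_all add: m_assoc)

lemma Hcarr_t_comm_product:
  assumes "S1 G" and h: "h \<in> Hcarr G"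
  shows "\<exists>v\<in>Hcarr G. \<exists>w\<in>Hcarr G. h = Hmul G (t_comm G v) (t_comm G w)"
proof -
  obtain M n where supp: "{i. h i \<noteq> \<one>} \<subseteq> {M..<M + int n}"
    using finite_int_subset_interval Hcarr_finite_support[OF h] by blast
  have hc: "\<And>i. h i \<in> carrier G"
    using h by (rule Hcarr_closed)
  obtain x y where xy: "x \<in> carrier G" "y \<in> carrier G"
    and p: "seg_prod G h M n = inv x \<otimes> y \<otimes> x \<otimes> inv y"
    using S1_imp_commutator[OF \<open>S1 G\<close> seg_prod_closed[of h M n]] hc by blast
  (* F is h preceded by y, x\<inverse>, y\<inverse> x; its ordered product is y x\<inverse> y\<inverse> x \<cdot> x\<inverse> y x y\<inverse> = 1. *)
  define K where "K = placed G [M - 3, M - 2, M - 1] [inv y, x, inv x \<otimes> y]"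
  define F where "F i = h i \<otimes> inv (K i)" for i
  have Kc: "K i \<in> carrier G" for i
    unfolding K_def using xy by (intro placed_closed) auto
  have K_supp: "{i. K i \<noteq> \<one>} \<subseteq> {M - 3, M - 2, M - 1}"
    unfolding K_def using xy by (intro placed_support[THEN order_trans]) auto
  have K_one: "K i = \<one>" if "M \<le> i" for i
  proof (rule ccontr)
    assume "K i \<noteq> \<one>"
    with K_supp have "i \<in> {M - 3, M - 2, M - 1}"
      by blast
    with that show False
      by auto
  qed
  have "K \<in> t_comm G ` Hcarr G"
    unfolding K_def using xy by (rule t_comm_three_point)
  moreover have "F \<in> t_comm G ` Hcarr G"
  proof (subst t_comm_image_iff_seg_prod)
    show "\<And>i. F i \<in> carrier G"
      unfolding F_def using hc Kc by simp
    have "{i. F i \<noteq> \<one>} \<subseteq> {i. h i \<noteq> \<one>} \<union> {i. K i \<noteq> \<one>}"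
      by (auto simp: F_def)
    moreover have "{M..<M + int n} \<union> {M - 3, M - 2, M - 1} \<subseteq> {M - 3..<M - 3 + int (Suc (Suc (Suc n)))}"
      by auto
    ultimately show "{i. F i \<noteq> \<one>} \<subseteq> {M - 3..<M - 3 + int (Suc (Suc (Suc n)))}"
      using supp K_supp by blast
    have "h i = \<one>" if "i < M" for i
      using supp that by fastforce
    then have "F (M - 3) = y" "F (M - 2) = inv x" "F (M - 1) = inv (inv x \<otimes> y)"
      using xy by (simp_all add: F_def K_def sgl_def Hone_def)
    moreover have "seg_prod G F M n = seg_prod G h M n"
      using K_one hc by (intro seg_prod_cong) (simp add: F_def)
    ultimately show "seg_prod G F (M - 3) (Suc (Suc (Suc n))) = \<one>"
      using xy by (simp add: p m_assoc inv_mult_group)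
  qed
  moreover have "h = Hmul G F K"
    using hc Kc by (simp add: F_def Hmul_def m_assoc)
  ultimately show ?thesis
    by blast
qed

lemma kt_comm_if_two_le:
  assumes "S1 G" "h \<in> Hcarr G" "2 \<le> k"
  shows "kt_comm G k h"
proof -
  obtain v w where vw: "v \<in> Hcarr G" "w \<in> Hcarr G" and h: "h = Hmul G (t_comm G v) (t_comm G w)"
    using Hcarr_t_comm_product assms(1,2) by blast
  let ?gs = "[v, w] @ replicate (nat k - 2) (Hone G)"
  have "Hprod_list G (map (t_comm G) ?gs) = Hprod_list G [t_comm G v, t_comm G w]"
    by (simp only: list.map map_append map_replicate t_comm_Hone Hprod_list_pad)
  also have "\<dots> = h"
    using t_comm_closed[OF vw(2)] by (simp add: h Hmul_def Hone_def)
  finally have "Hprod_list G (map (t_comm G) ?gs) = h" .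
  moreover have "length ?gs = nat k" "set ?gs \<subseteq> Hcarr G"
    using assms(3) vw by (auto simp: Hcarr_def Hone_def)
  ultimately show ?thesis
    unfolding kt_comm_def t_comm_def[symmetric] using assms(3) by fastforce
qed

lemma kt_comm_if_le_minus_two:
  assumes "S1 G" "h \<in> Hcarr G" "k \<le> - 2"
  shows "kt_comm G k h"
proof -
  have "Hinv G h \<in> Hcarr G"
    unfolding Hinv_def using assms(2) by (rule Hcarr_inv)
  then obtain v w where vw: "v \<in> Hcarr G" "w \<in> Hcarr G"
    and h: "Hinv G h = Hmul G (t_comm G v) (t_comm G w)"
    using Hcarr_t_comm_product assms(1) by blast
  (* \<alpha>(g) g\<inverse> is the inverse of t_comm G g, hence the reversed order of v and w *)
  let ?F = "\<lambda>g. Hmul G (shift g) (Hinv G g)"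
  let ?gs = "[w, v] @ replicate (nat (- k) - 2) (Hone G)"
  have "?F (Hone G) = Hone G"
    by (simp add: Hmul_def Hinv_def shift_def Hone_def)
  then have "Hprod_list G (map ?F ?gs) = Hprod_list G [?F w, ?F v]"
    by (simp only: list.map map_append map_replicate Hprod_list_pad)
  also have "\<dots> = h"
  proof
    fix i
    have "inv (h i) = v i \<otimes> inv (v (i + 1)) \<otimes> (w i \<otimes> inv (w (i + 1)))"
      using fun_cong[OF h, of i] by (simp add: Hinv_def Hmul_def t_comm_apply)
    then have "h i = inv (v i \<otimes> inv (v (i + 1)) \<otimes> (w i \<otimes> inv (w (i + 1))))"
      using Hcarr_closed[OF assms(2)] by (metis inv_inv)
    then show "Hprod_list G [?F w, ?F v] i = h i"
      using Hcarr_closed[OF vw(1)] Hcarr_closed[OF vw(2)]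
      by (simp add: Hmul_def Hinv_def shift_def Hone_def m_assoc inv_mult_group)
  qed
  finally have "Hprod_list G (map ?F ?gs) = h" .
  moreover have "length ?gs = nat (- k)" "set ?gs \<subseteq> Hcarr G"
    using assms(3) vw by (auto simp: Hcarr_def Hone_def)
  ultimately show ?thesis
    unfolding kt_comm_def using assms(3) by fastforce
qed

lemma kt_comm_placed_reindex:
  assumes "S1 G" and xs: "sorted_wrt (<) xs" "length xs = length hs"
    and ys: "sorted_wrt (<) ys" "length ys = length hs" and hs: "set hs \<subseteq> carrier G"
    and "kt_comm G k (placed G xs hs)"
  shows "kt_comm G k (placed G ys hs)"
proof -
  consider "2 \<le> k" | "k \<le> - 2" | "k = 1" | "k = - 1" | "k = 0"
    by linarith
  then show ?thesis
  proof cases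
    case 1
    then show ?thesis
      using kt_comm_if_two_le[OF assms(1) placed_Hcarr[OF hs]] by blast
  next
    case 2
    then show ?thesis
      using kt_comm_if_le_minus_two[OF assms(1) placed_Hcarr[OF hs]] by blast
  next
    case 3
    then show ?thesis
      using assms(7) by (simp add: kt_comm_one_placed_iff xs ys hs)
  next
    case 4
    then show ?thesis
      using assms(7) by (simp add: kt_comm_minus_one_placed_iff xs ys hs)
  next
    case 5
    then show ?thesis
      using assms(7) by (simp add: kt_comm_def)
  qed
qed

end

theorem lemma4p8:
  fixes G :: "('a, 'b) monoid_scheme"
    and "is" :: "int list" and hs :: "'a list"
  assumes "group G" and "finite (carrier G)"
    and "S1 G" and "S2 G" and "S3 G" and "S4 G"
    and "sorted_wrt (<) is" and "length hs = length is"
    and "set hs \<subseteq> carrier G" and "\<one>\<^bsub>G\<^esub> \<notin> set hs"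
  shows "(\<forall>k::int. k \<noteq> 0 \<longrightarrow>
            kt_comm G k (Hprod_list G (map (\<lambda>(i, h). sgl G i h) (zip is hs))) \<longrightarrow>
            kt_comm G k (Hprod_list G (map (\<lambda>(j, h). sgl G (int j) h) (zip [1..<length hs + 1] hs))))
       \<and> (pm_comm G (Hprod_list G (map (\<lambda>(i, h). sgl G i h) (zip is hs))) \<longrightarrow>
            pm_comm G (Hprod_list G (map (\<lambda>(j, h). sgl G (int j) h) (zip [1..<length hs + 1] hs))))"
proof -
  interpret group G by fact
  define ys where "ys = map int [1..<length hs + 1]"
  have ys: "sorted_wrt (<) ys" "length ys = length hs"
    by (simp_all add: ys_def sorted_wrt_map del: upt_Suc)
  have "Hprod_list G (map (\<lambda>(j, h). sgl G (int j) h) (zip [1..<length hs + 1] hs)) = placed G ys hs"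
    by (simp add: ys_def placed_def zip_map1 case_prod_unfold o_def del: upt_Suc)
  then show ?thesis
    unfolding placed_def[symmetric]
    using kt_comm_placed_reindex[OF \<open>S1 G\<close> _ _ ys] assms(7-9)
    by (simp add: pm_comm_placed_iff ys)
qed

end
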